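(* For every integer $N\ge 0$, let $T_{2\times 3}(9,N)$ be the number of tilings of a $9\times n$ rectangle, $n=2N/3$, by $N$ tiles of size $2\times 3$ (and $0$ if $2N/3\notin\mathbb{Z}$). Then, as formal power series, \[ \sum_{N\ge 0} T_{2\times 3}(9,N)\,z^N=\frac{1-z^3}{1-2z^3+z^6-4z^9+2z^{12}}. \]
   Context: A tiling of an $m\times n$ rectangle (width $m$, length $n$, made of $mn$ unit squares) by $a\times b$ tiles is a partition of the rectangle into non-overlapping axis-parallel $a\times b$ rectangles with integer corner coordinates, each placed in either of its two orientations. Tilings related by reflections or rotations of the rectangle are counted as distinct. The empty tiling counts once for $N=0$. *)

theory Defs
  imports "HOL-Computational_Algebra.Formal_Power_Series"
begin

text \<open>The m x n rectangle (width m along the first coordinate, length n along the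
second), as its set of unit cells, each cell identified by its lower-left corner.\<close>
definition rect :: "nat \<Rightarrow> nat \<Rightarrow> (nat \<times> nat) set" where
  "rect m n = {0..<m} \<times> {0..<n}"

definition is_tile :: "nat \<Rightarrow> nat \<Rightarrow> (nat \<times> nat) set \<Rightarrow> bool" where
  "is_tile a b S \<longleftrightarrow>
     (\<exists>x y. S = {x..<x+a} \<times> {y..<y+b} \<or> S = {x..<x+b} \<times> {y..<y+a})"

definition tilings :: "nat \<Rightarrow> nat \<Rightarrow> nat \<Rightarrow> nat \<Rightarrow> (nat \<times> nat) set set set" where
  "tilings a b m n = {P. (\<forall>S\<in>P. is_tile a b S \<and> S \<subseteq> rect m n)
                         \<and> pairwise disjnt P \<and> \<Union>P = rect m n}"

definition T23_9 :: "nat \<Rightarrow> nat" where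
  "T23_9 N = (if 3 dvd 2 * N
              then card {P \<in> tilings 2 3 9 (2 * N div 3). card P = N}
              else 0)"

end

theory Submission
  imports Defs "HOL-Library.Product_Lexorder"
begin

text \<open>
  A tiling of the 9 \<times> n rectangle by 2 \<times> 3 tiles has 3n/2 tiles by area, so
  T_{2\<times>3}(9, 3k) = c(2k), where c(L) counts the tilings of the 9 \<times> L rectangle, and
  T_{2\<times>3}(9, N) = 0 unless 3 divides N.  To count, describe a partially tiled strip by the
  heights to which its columns are filled: the lowest cell of the leftmost lowest
  column must be the corner of an upright or of a lying tile, which gives a recursion
  on such profiles.  Up to a vertical shift only finitely many profiles occur, so
  rewriting c(L+8) - 2 c(L+6) + c(L+4) - 4 c(L+2) + 2 c(L) with this recursion and collecting
  like terms ends, after finitely many steps checked by evaluation, with the empty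
  combination; this proves the recurrence.  Together with the first few values it says that the denominator
  times the generating function is 1 - z^3.
\<close>

definition tilings_of :: "nat \<Rightarrow> nat \<Rightarrow> (nat \<times> nat) set \<Rightarrow> (nat \<times> nat) set set set" where
  "tilings_of a b U = {P. (\<forall>S\<in>P. is_tile a b S \<and> S \<subseteq> U) \<and> pairwise disjnt P \<and> \<Union>P = U}"

lemma tilings_eq_tilings_of_rect: "tilings a b m n = tilings_of a b (rect m n)"
  by (simp add: tilings_def tilings_of_def)

lemma finite_tilings_of: "finite U \<Longrightarrow> finite (tilings_of a b U)"
  by (rule finite_subset[of _ "Pow (Pow U)"]) (auto simp: tilings_of_def)

definition block :: "nat \<Rightarrow> nat \<Rightarrow> nat \<Rightarrow> nat \<Rightarrow> (nat \<times> nat) set" where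
  "block a b x y = {x..<x+a} \<times> {y..<y+b}"

lemma is_tile_iff_block: "is_tile a b S \<longleftrightarrow> (\<exists>x y. S = block a b x y \<or> S = block b a x y)"
  by (simp add: is_tile_def block_def)

lemma block_corner: "0 < a \<Longrightarrow> 0 < b \<Longrightarrow> (x, y) \<in> block a b x y"
  by (simp add: block_def)

lemma is_tile_nonempty: "0 < a \<Longrightarrow> 0 < b \<Longrightarrow> is_tile a b S \<Longrightarrow> S \<noteq> {}"
  by (auto simp: is_tile_iff_block dest: block_corner)

lemma tilings_of_empty: "0 < a \<Longrightarrow> 0 < b \<Longrightarrow> tilings_of a b {} = {{}}"
  by (auto simp: tilings_of_def dest: is_tile_nonempty)

lemma card_tiling:
  assumes "P \<in> tilings a b m n"
  shows "a * b * card P = m * n"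
proof -
  have P: "\<forall>S\<in>P. is_tile a b S" "pairwise disjnt P" "\<Union>P = rect m n"
    using assms by (auto simp: tilings_def)
  have card_S: "card S = a * b" and fin_S: "finite S" if "S \<in> P" for S
    using P(1) that by (auto simp: is_tile_iff_block block_def card_cartesian_product)
  have "card (\<Union>P) = (\<Sum>S\<in>P. card S)"
    using P(2) fin_S by (rule card_Union_disjoint)
  also have "\<dots> = a * b * card P"
    by (simp add: card_S)
  finally show ?thesis
    using P(3) by (simp add: rect_def card_cartesian_product)
qed

lemma card_tilings_of_containing:
  assumes tile: "is_tile a b t" and "t \<noteq> {}"
  shows "card {P \<in> tilings_of a b U. t \<in> P} = (if t \<subseteq> U then card (tilings_of a b (U - t)) else 0)"
proof (cases "t \<subseteq> U")
  case False
  then have empty: "{P \<in> tilings_of a b U. t \<in> P} = {}"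
    by (auto simp: tilings_of_def)
  show ?thesis
    unfolding empty using False by simp
next
  case True
  have not_in: "t \<notin> Q" if "Q \<in> tilings_of a b (U - t)" for Q
    using that \<open>t \<noteq> {}\<close> by (auto simp: tilings_of_def)
  have "{P \<in> tilings_of a b U. t \<in> P} = insert t ` tilings_of a b (U - t)"
  proof (intro equalityI subsetI)
    fix P assume "P \<in> {P \<in> tilings_of a b U. t \<in> P}"
    then have P: "P \<in> tilings_of a b U" "t \<in> P"
      by auto
    have "disjnt S t" if "S \<in> P - {t}" for S
      using P that by (auto simp: tilings_of_def pairwise_def)
    then have "P - {t} \<in> tilings_of a b (U - t)"
      using P unfolding tilings_of_def pairwise_def disjnt_def by blast
    moreover have "P = insert t (P - {t})"
      using P by auto
    ultimately show "P \<in> insert t ` tilings_of a b (U - t)"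
      by blast
  next
    fix P assume "P \<in> insert t ` tilings_of a b (U - t)"
    then obtain Q where Q: "Q \<in> tilings_of a b (U - t)" "P = insert t Q"
      by auto
    then show "P \<in> {P \<in> tilings_of a b U. t \<in> P}"
      using tile True by (auto simp: tilings_of_def pairwise_insert disjnt_def)
  qed
  moreover have "inj_on (insert t) (tilings_of a b (U - t))"
    by (rule inj_onI) (metis insert_ident not_in)
  ultimately show ?thesis
    using True by (simp add: card_image)
qed

lemma tile_covering_first_cell:
  assumes "is_tile a b S" "S \<subseteq> U" "(x0, y0) \<in> S"
    and first: "\<And>x y. (x, y) \<in> U \<Longrightarrow> y0 < y \<or> y = y0 \<and> x0 \<le> x"
  shows "S = block a b x0 y0 \<or> S = block b a x0 y0"
proof -
  obtain x y where S: "S = block a b x y \<or> S = block b a x y"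
    using assms(1) by (auto simp: is_tile_iff_block)
  then have "(x, y) \<in> U" "x \<le> x0" "y \<le> y0"
    using assms(2,3) by (auto simp: block_def)
  then have "x = x0" "y = y0"
    using first[of x y] by auto
  then show ?thesis
    using S by simp
qed

lemma card_tilings_of_first_cell:
  assumes "0 < a" "0 < b" "a \<noteq> b" "(x0, y0) \<in> U" "finite U"
    and first: "\<And>x y. (x, y) \<in> U \<Longrightarrow> y0 < y \<or> y = y0 \<and> x0 \<le> x"
  defines "t \<equiv> block a b x0 y0" and "t' \<equiv> block b a x0 y0"
  shows "card (tilings_of a b U) =
           (if t \<subseteq> U then card (tilings_of a b (U - t)) else 0)
         + (if t' \<subseteq> U then card (tilings_of a b (U - t')) else 0)"
proof -
  have tiles: "is_tile a b t" "is_tile a b t'"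
    by (auto simp: t_def t'_def is_tile_iff_block)
  have corner: "(x0, y0) \<in> t" "(x0, y0) \<in> t'"
    using assms(1,2) by (simp_all add: t_def t'_def block_corner)
  then have nonempty: "t \<noteq> {}" "t' \<noteq> {}"
    by auto
  have "t \<noteq> t'"
    using assms(1-3) by (auto simp: t_def t'_def block_def times_eq_iff dest: arg_cong[where f = card])
  have split: "tilings_of a b U = {P \<in> tilings_of a b U. t \<in> P} \<union> {P \<in> tilings_of a b U. t' \<in> P}"
  proof (intro equalityI subsetI)
    fix P assume P: "P \<in> tilings_of a b U"
    then obtain S where "S \<in> P" "(x0, y0) \<in> S"
      using assms(4) by (auto simp: tilings_of_def)
    moreover from this have "S = t \<or> S = t'"
      using P unfolding t_def t'_def by (intro tile_covering_first_cell[of a b S U, OF _ _ _ first]) (auto simp: tilings_of_def)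
    ultimately show "P \<in> {P \<in> tilings_of a b U. t \<in> P} \<union> {P \<in> tilings_of a b U. t' \<in> P}"
      using P by auto
  qed auto
  have "{P \<in> tilings_of a b U. t \<in> P} \<inter> {P \<in> tilings_of a b U. t' \<in> P} = {}"
  proof (rule equals0I)
    fix P assume "P \<in> {P \<in> tilings_of a b U. t \<in> P} \<inter> {P \<in> tilings_of a b U. t' \<in> P}"
    then have "disjnt t t'"
      using \<open>t \<noteq> t'\<close> by (auto simp: tilings_of_def pairwise_def)
    then show False
      using corner by (auto simp: disjnt_def)
  qed
  then have "card (tilings_of a b U) = card {P \<in> tilings_of a b U. t \<in> P} + card {P \<in> tilings_of a b U. t' \<in> P}"
    using finite_tilings_of[OF assms(5)] by (subst split) (rule card_Un_disjoint, auto)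
  also have "\<dots> = (if t \<subseteq> U then card (tilings_of a b (U - t)) else 0)
                  + (if t' \<subseteq> U then card (tilings_of a b (U - t')) else 0)"
    unfolding card_tilings_of_containing[OF tiles(1) nonempty(1)]
      card_tilings_of_containing[OF tiles(2) nonempty(2)] ..
  finally show ?thesis .
qed

text \<open>The cells of the strip {..<length h} \<times> {..<L} still to be tiled when column x is
  already filled up to height h ! x.\<close>

definition profile_region :: "nat list \<Rightarrow> nat \<Rightarrow> (nat \<times> nat) set" where
  "profile_region h L = {(x, y). x < length h \<and> h ! x \<le> y \<and> y < L}"

lemma rect_eq_profile_region: "rect m n = profile_region (replicate m 0) n"
  by (auto simp: rect_def profile_region_def)

lemma finite_profile_region: "finite (profile_region h L)"
  by (rule finite_subset[of _ "{..<length h} \<times> {..<L}"]) (auto simp: profile_region_def)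

definition flat_at :: "nat list \<Rightarrow> nat \<Rightarrow> nat \<Rightarrow> nat \<Rightarrow> bool" where
  "flat_at h i w m \<longleftrightarrow> i + w \<le> length h \<and> list_all (\<lambda>k. h ! k = m) [i..<i+w]"

lemma flat_at_iff: "flat_at h i w m \<longleftrightarrow> i + w \<le> length h \<and> (\<forall>k. i \<le> k \<and> k < i + w \<longrightarrow> h ! k = m)"
  by (auto simp: flat_at_def list_all_iff)

definition raise_columns :: "nat list \<Rightarrow> nat \<Rightarrow> nat \<Rightarrow> nat \<Rightarrow> nat list" where
  "raise_columns h i w v = map (\<lambda>k. if i \<le> k \<and> k < i + w then v else h ! k) [0..<length h]"

lemma length_raise_columns [simp]: "length (raise_columns h i w v) = length h"
  by (simp add: raise_columns_def)

lemma nth_raise_columns [simp]: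
  "k < length h \<Longrightarrow> raise_columns h i w v ! k = (if i \<le> k \<and> k < i + w then v else h ! k)"
  by (simp add: raise_columns_def)

lemma profile_region_raise_columns:
  "flat_at h i w m \<Longrightarrow> profile_region (raise_columns h i w (m + d)) L = profile_region h L - block w d i m"
  by (auto simp: flat_at_iff profile_region_def block_def split: if_splits)

lemma block_subset_profile_region_iff:
  assumes "\<forall>k<length h. m \<le> h ! k" "0 < w" "0 < d"
  shows "block w d i m \<subseteq> profile_region h L \<longleftrightarrow> flat_at h i w m \<and> m + d \<le> L"
proof
  assume sub: "block w d i m \<subseteq> profile_region h L"
  have "(i + w - 1, m) \<in> block w d i m" "(i, m + d - 1) \<in> block w d i m"
    using assms by (auto simp: block_def)
  then have "i + w \<le> length h" "m + d \<le> L"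
    using sub by (auto simp: profile_region_def)
  moreover have "h ! k = m" if "i \<le> k" "k < i + w" for k
  proof -
    have "(k, m) \<in> block w d i m"
      using that assms by (simp add: block_def)
    then have "k < length h" "h ! k \<le> m"
      using sub by (auto simp: profile_region_def)
    then show ?thesis
      using assms(1) by (simp add: antisym)
  qed
  ultimately show "flat_at h i w m \<and> m + d \<le> L"
    by (simp add: flat_at_iff)
qed (auto simp: flat_at_iff profile_region_def block_def)

lemma card_profile_region_raise_columns_less:
  assumes "flat_at h i w m" "0 < w" "0 < d" "m + d \<le> L"
  shows "card (profile_region (raise_columns h i w (m + d)) L) < card (profile_region h L)"
proof -
  have "(i, m) \<in> profile_region h L"
    using assms by (auto simp: flat_at_iff profile_region_def)
  moreover have "(i, m) \<in> block w d i m"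
    using assms by (simp add: block_corner)
  ultimately show ?thesis
    unfolding profile_region_raise_columns[OF assms(1)]
    by (intro psubset_card_mono finite_profile_region) blast
qed

definition lowest_column :: "nat list \<Rightarrow> nat" where
  "lowest_column h = length (takeWhile (\<lambda>y. y \<noteq> min_list h) h)"

lemma min_list_le_nth:
  fixes h :: "'a::linorder list"
  assumes "k < length h"
  shows "min_list h \<le> h ! k"
proof -
  have "h \<noteq> []"
    using assms by auto
  then show ?thesis
    using assms by (simp add: min_list_Min)
qed

lemma min_list_in_set: "h \<noteq> [] \<Longrightarrow> min_list h \<in> set (h :: 'a::linorder list)"
  by (simp add: min_list_Min)

lemma length_takeWhile_neq_less: "v \<in> set xs \<Longrightarrow> length (takeWhile (\<lambda>y. y \<noteq> v) xs) < length xs"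
  by (induction xs) auto

lemma lowest_column_less_length: "h \<noteq> [] \<Longrightarrow> lowest_column h < length h"
  unfolding lowest_column_def by (intro length_takeWhile_neq_less min_list_in_set)

lemma nth_lowest_column: "h \<noteq> [] \<Longrightarrow> h ! lowest_column h = min_list h"
  using nth_length_takeWhile[of "\<lambda>y. y \<noteq> min_list h" h] lowest_column_less_length[of h]
  by (simp add: lowest_column_def)

lemma nth_less_lowest_column: "k < lowest_column h \<Longrightarrow> h ! k \<noteq> min_list h"
proof -
  assume "k < lowest_column h"
  then have "h ! k \<in> set (takeWhile (\<lambda>y. y \<noteq> min_list h) h)"
    using nth_mem[of k "takeWhile _ h"] takeWhile_nth[of k _ h] unfolding lowest_column_def by simp
  then show ?thesis
    by (auto dest: set_takeWhileD)
qed

lemma first_cell_in_profile_region: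
  assumes "\<not> (\<forall>y\<in>set h. L \<le> y)"
  shows "(lowest_column h, min_list h) \<in> profile_region h L"
proof -
  have "h \<noteq> []"
    using assms by auto
  moreover have "min_list h < L"
    using assms \<open>h \<noteq> []\<close> by (auto simp: min_list_Min Min_less_iff not_le)
  ultimately show ?thesis
    using lowest_column_less_length nth_lowest_column by (simp add: profile_region_def)
qed

lemma profile_region_above_first_cell:
  assumes "(x, y) \<in> profile_region h L"
  shows "min_list h < y \<or> y = min_list h \<and> lowest_column h \<le> x"
proof (cases "min_list h < y")
  case False
  with assms have "h ! x = min_list h" "y = min_list h"
    using min_list_le_nth[of x h] by (auto simp: profile_region_def)
  then show ?thesis
    using nth_less_lowest_column by (auto simp: not_less[symmetric])
qed simp

text \<open>The first untiled cell, at the lowest level in the leftmost lowest column, is the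
  corner of the tile covering it.\<close>

function profile_count :: "nat list \<Rightarrow> nat \<Rightarrow> nat" where
  "profile_count h L =
     (if \<forall>y\<in>set h. L \<le> y then 1 else
        let m = min_list h; i = lowest_column h in
          (if flat_at h i 2 m \<and> m + 3 \<le> L then profile_count (raise_columns h i 2 (m + 3)) L else 0)
        + (if flat_at h i 3 m \<and> m + 2 \<le> L then profile_count (raise_columns h i 3 (m + 2)) L else 0))"
  by pat_completeness auto
termination
  by (relation "measure (\<lambda>(h, L). card (profile_region h L))")
     (auto simp del: add_2_eq_Suc' intro: card_profile_region_raise_columns_less)

declare profile_count.simps [simp del]

lemma card_tilings_of_profile_region: "card (tilings_of 2 3 (profile_region h L)) = profile_count h L"
proof (induction h L rule: profile_count.induct)
  case (1 h L)
  show ?case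
  proof (cases "\<forall>y\<in>set h. L \<le> y")
    case True
    then have "profile_region h L = {}"
      by (auto simp: profile_region_def dest!: nth_mem)
    then show ?thesis
      using True by (subst profile_count.simps) (simp add: tilings_of_empty)
  next
    case False
    define m i where "m = min_list h" and "i = lowest_column h"
    have heights: "\<forall>k<length h. m \<le> h ! k"
      by (simp add: m_def min_list_le_nth)
    have corner: "(i, m) \<in> profile_region h L"
      using False unfolding m_def i_def by (rule first_cell_in_profile_region)
    have first: "m < y \<or> y = m \<and> i \<le> x" if "(x, y) \<in> profile_region h L" for x y
      using that unfolding m_def i_def by (rule profile_region_above_first_cell)
    have remove_block:
      "(if block w d i m \<subseteq> profile_region h L
        then card (tilings_of 2 3 (profile_region h L - block w d i m)) else 0)
     = (if flat_at h i w m \<and> m + d \<le> L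
        then card (tilings_of 2 3 (profile_region (raise_columns h i w (m + d)) L)) else 0)"
      if "0 < w" "0 < d" for w d
      using that heights by (simp add: block_subset_profile_region_iff profile_region_raise_columns)
    have "card (tilings_of 2 3 (profile_region h L)) =
            (if block 2 3 i m \<subseteq> profile_region h L
             then card (tilings_of 2 3 (profile_region h L - block 2 3 i m)) else 0)
          + (if block 3 2 i m \<subseteq> profile_region h L
             then card (tilings_of 2 3 (profile_region h L - block 3 2 i m)) else 0)"
      by (rule card_tilings_of_first_cell[OF _ _ _ corner finite_profile_region first]) simp_all
    also have "\<dots> = profile_count h L"
      unfolding remove_block[of 2 3, simplified] remove_block[of 3 2, simplified]
      unfolding profile_count.simps[of h L] if_not_P[OF False] Let_def m_def[symmetric] i_def[symmetric]
      using 1(1,2)[OF False m_def i_def] by simp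
    finally show ?thesis .
  qed
qed

lemma min_list_map_add: "h \<noteq> [] \<Longrightarrow> min_list (map (\<lambda>x. x + c) h) = min_list h + (c::nat)"
proof (induction h)
  case (Cons x xs)
  then show ?case
    by (cases xs) auto
qed simp

lemma lowest_column_map_add: "h \<noteq> [] \<Longrightarrow> lowest_column (map (\<lambda>x. x + c) h) = lowest_column h"
  by (simp add: lowest_column_def min_list_map_add takeWhile_map comp_def)

lemma flat_at_map_add: "flat_at (map (\<lambda>x. x + c) h) i w (m + c) \<longleftrightarrow> flat_at h i w m"
  by (auto simp: flat_at_iff)

lemma raise_columns_map_add:
  "raise_columns (map (\<lambda>x. x + c) h) i w (v + c) = map (\<lambda>x. x + c) (raise_columns h i w v)"
  by (simp add: raise_columns_def)

lemma profile_count_shift: "profile_count (map (\<lambda>x. x + c) h) (L + c) = profile_count h L"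
proof (induction h L rule: profile_count.induct)
  case (1 h L)
  let ?h = "map (\<lambda>x. x + c) h"
  have full: "(\<forall>y\<in>set ?h. L + c \<le> y) \<longleftrightarrow> (\<forall>y\<in>set h. L \<le> y)"
    by simp
  show ?case
  proof (cases "\<forall>y\<in>set h. L \<le> y")
    case True
    then show ?thesis
      unfolding profile_count.simps[of h L] profile_count.simps[of ?h "L + c"] full by simp
  next
    case False
    define m i where "m = min_list h" and "i = lowest_column h"
    have "h \<noteq> []"
      using False by auto
    then have "min_list ?h = m + c" "lowest_column ?h = i"
      by (simp_all add: m_def i_def min_list_map_add lowest_column_map_add)
    moreover have "flat_at ?h i w (m + c) \<longleftrightarrow> flat_at h i w m" for w
      by (rule flat_at_map_add)
    moreover have "raise_columns ?h i w (m + c + d) = map (\<lambda>x. x + c) (raise_columns h i w (m + d))" for w d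
      using raise_columns_map_add[of c h i w "m + d"] by (simp add: add_ac)
    ultimately show ?thesis
      unfolding profile_count.simps[of h L] profile_count.simps[of ?h "L + c"] full if_not_P[OF False]
        Let_def m_def[symmetric] i_def[symmetric]
      using 1(1,2)[OF False m_def i_def] by (simp del: add_2_eq_Suc')
  qed
qed

definition normalize_profile :: "nat list \<Rightarrow> nat list \<times> nat" where
  "normalize_profile h = (map (\<lambda>x. x - min_list h) h, min_list h)"

lemma profile_count_normalize:
  assumes "min_list h \<le> L"
  shows "profile_count h L = profile_count (fst (normalize_profile h)) (L - snd (normalize_profile h))"
proof (cases "h = []")
  case False
  let ?m = "min_list h"
  have "h = map (\<lambda>x. x + ?m) (map (\<lambda>x. x - ?m) h)"
    by (rule nth_equalityI) (auto simp: min_list_le_nth)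
  then have "profile_count h L = profile_count (map (\<lambda>x. x + ?m) (map (\<lambda>x. x - ?m) h)) (L - ?m + ?m)"
    using assms by simp
  then show ?thesis
    by (simp only: profile_count_shift normalize_profile_def fst_conv snd_conv)
next
  case True
  have "profile_count [] n = 1" for n
    by (subst profile_count.simps) simp
  with True show ?thesis
    by (simp add: normalize_profile_def)
qed

definition profile_successors :: "nat list \<Rightarrow> (nat list \<times> nat) list" where
  "profile_successors h =
     (let i = lowest_column h in
        (if flat_at h i 2 0 then [normalize_profile (raise_columns h i 2 3)] else [])
      @ (if flat_at h i 3 0 then [normalize_profile (raise_columns h i 3 2)] else []))"

lemma profile_count_eq_sum_successors:
  assumes "0 \<in> set h" "3 \<le> L"
  shows "profile_count h L = (\<Sum>(h', s)\<leftarrow>profile_successors h. profile_count h' (L - s))"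
proof -
  define i where "i = lowest_column h"
  have "h \<noteq> []"
    using assms(1) by auto
  have "min_list h = 0"
    using assms(1) Min_le[of "set h" 0] by (simp add: min_list_Min \<open>h \<noteq> []\<close>)
  have not_full: "\<not> (\<forall>y\<in>set h. L \<le> y)"
    using assms by force
  have raised: "profile_count (raise_columns h i w v) L
      = profile_count (fst (normalize_profile (raise_columns h i w v))) (L - snd (normalize_profile (raise_columns h i w v)))"
    if "0 < w" "v \<le> 3" for w v
  proof (rule profile_count_normalize)
    have "min_list (raise_columns h i w v) \<le> raise_columns h i w v ! i"
      using lowest_column_less_length[OF \<open>h \<noteq> []\<close>] by (intro min_list_le_nth) (simp add: i_def)
    also have "\<dots> = v"
      using lowest_column_less_length[OF \<open>h \<noteq> []\<close>] that by (simp add: i_def)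
    finally show "min_list (raise_columns h i w v) \<le> L"
      using that assms(2) by simp
  qed
  show ?thesis
    unfolding profile_count.simps[of h L] if_not_P[OF not_full] Let_def \<open>min_list h = 0\<close>
      i_def[symmetric] profile_successors_def
    using assms(2) raised[of 2 3] raised[of 3 2] by (simp add: split_def del: add_2_eq_Suc')
qed

text \<open>A term ((h, j), c) of a linear combination stands for c \<cdot> profile_count h (L + j).
  Offsets may become negative; such terms are never expanded and have to cancel.\<close>

type_synonym lincomb = "((nat list \<times> int) \<times> int) list"

definition lincomb_value :: "lincomb \<Rightarrow> nat \<Rightarrow> int" where
  "lincomb_value C L = (\<Sum>((h, j), c)\<leftarrow>C. c * int (profile_count h (nat (int L + j))))"

fun lincomb_add :: "nat list \<times> int \<Rightarrow> int \<Rightarrow> lincomb \<Rightarrow> lincomb" where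
  "lincomb_add k c [] = (if c = 0 then [] else [(k, c)])"
| "lincomb_add k c ((k', c') # C) =
     (if k = k' then (if c + c' = 0 then C else (k, c + c') # C) else (k', c') # lincomb_add k c C)"

lemma lincomb_value_add:
  "lincomb_value (lincomb_add (h, j) c C) L = lincomb_value C L + c * int (profile_count h (nat (int L + j)))"
  by (induction "(h, j)" c C rule: lincomb_add.induct) (auto simp: lincomb_value_def algebra_simps add_eq_0_iff)

fun lincomb_expand :: "nat list \<times> int \<Rightarrow> int \<Rightarrow> lincomb \<Rightarrow> lincomb" where
  "lincomb_expand (h, j) c C = fold (\<lambda>(h', s). lincomb_add (h', j - int s) c) (profile_successors h) C"

lemma lincomb_value_expand:
  assumes "0 \<in> set h" "0 \<le> j" "3 \<le> L"
  shows "lincomb_value (lincomb_expand (h, j) c C) L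
       = lincomb_value C L + c * int (profile_count h (nat (int L + j)))"
proof -
  have fold: "lincomb_value (fold (\<lambda>(h', s). lincomb_add (h', j - int s) c) xs C) L
      = lincomb_value C L + c * (\<Sum>(h', s)\<leftarrow>xs. int (profile_count h' (nat (int L + j - int s))))" for xs C
    by (induction xs arbitrary: C) (auto simp: lincomb_value_add algebra_simps)
  have "profile_count h (nat (int L + j))
      = (\<Sum>(h', s)\<leftarrow>profile_successors h. profile_count h' (nat (int L + j) - s))"
    using assms by (intro profile_count_eq_sum_successors) auto
  then have "int (profile_count h (nat (int L + j)))
      = (\<Sum>(h', s)\<leftarrow>profile_successors h. int (profile_count h' (nat (int L + j - int s))))"
    using assms(2) by (simp add: sum_list_of_nat[symmetric] comp_def split_def nat_minus_as_int)
  then show ?thesis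
    by (simp add: fold)
qed

text \<open>Expanding the terms of largest offset first lets equal terms meet and cancel.\<close>

definition next_term :: "lincomb \<Rightarrow> ((nat list \<times> int) \<times> int) option" where
  "next_term C =
     (case filter (\<lambda>((h, j), c). 0 \<le> j \<and> 0 \<in> set h) C of
        [] \<Rightarrow> None
      | D \<Rightarrow> Some (arg_min_list (\<lambda>((h, j), c). (- j, sum_list h)) D))"

lemma next_term_SomeD:
  assumes "next_term C = Some ((h, j), c)"
  shows "((h, j), c) \<in> set C" "0 \<le> j" "0 \<in> set h"
proof -
  let ?D = "filter (\<lambda>((h, j), c). 0 \<le> j \<and> 0 \<in> set h) C"
  have "?D \<noteq> []" "((h, j), c) = arg_min_list (\<lambda>((h, j), c). (- j, sum_list h)) ?D"
    using assms by (auto simp: next_term_def split: list.splits)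
  then have "((h, j), c) \<in> set ?D"
    by (metis arg_min_list_in)
  then show "((h, j), c) \<in> set C" "0 \<le> j" "0 \<in> set h"
    by auto
qed

fun reduce :: "nat \<Rightarrow> lincomb \<Rightarrow> lincomb" where
  "reduce 0 C = C"
| "reduce (Suc n) C =
     (case next_term C of
        None \<Rightarrow> C
      | Some ((h, j), c) \<Rightarrow> reduce n (lincomb_expand (h, j) c (remove1 ((h, j), c) C)))"

lemma lincomb_value_reduce: "3 \<le> L \<Longrightarrow> lincomb_value (reduce n C) L = lincomb_value C L"
proof (induction n arbitrary: C)
  case (Suc n)
  show ?case
  proof (cases "next_term C")
    case (Some t)
    obtain h j c where t: "t = ((h, j), c)"
      by (metis prod.collapse)
    note selected = next_term_SomeD[OF Some[unfolded t]]
    have "lincomb_value (reduce (Suc n) C) L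
        = lincomb_value (lincomb_expand (h, j) c (remove1 ((h, j), c) C)) L"
      using Some Suc.IH[OF Suc.prems] by (simp add: t)
    also have "\<dots> = lincomb_value (remove1 ((h, j), c) C) L + c * int (profile_count h (nat (int L + j)))"
      by (rule lincomb_value_expand[OF selected(3,2) Suc.prems])
    also have "\<dots> = lincomb_value C L"
      using sum_list_map_remove1[OF selected(1), of "\<lambda>((h, j), c). c * int (profile_count h (nat (int L + j)))"]
      by (simp add: lincomb_value_def)
    finally show ?thesis .
  qed simp
qed simp

lemma reduce_recurrence_9:
  "reduce 200 [((replicate 9 0, 8), 1), ((replicate 9 0, 6), -2), ((replicate 9 0, 4), 1),
               ((replicate 9 0, 2), -4), ((replicate 9 0, 0), 2)] = []"
  by code_simp

lemma profile_count_9_values: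
  "map (profile_count (replicate 9 0)) [0..<11] = [1, 0, 1, 0, 1, 0, 5, 0, 11, 0, 19]"
  by code_simp

lemma profile_count_9_small:
  "k < 11 \<Longrightarrow> profile_count (replicate 9 0) k = [1, 0, 1, 0, 1, 0, 5, 0, 11, 0, 19] ! k"
  using arg_cong[OF profile_count_9_values, of "\<lambda>xs. xs ! k"] by simp

lemma profile_count_9_recurrence:
  "profile_count (replicate 9 0) (L + 8) + profile_count (replicate 9 0) (L + 4)
     + 2 * profile_count (replicate 9 0) L
   = 2 * profile_count (replicate 9 0) (L + 6) + 4 * profile_count (replicate 9 0) (L + 2)"
proof (cases "3 \<le> L")
  case True
  let ?C = "[((replicate 9 0, 8), 1), ((replicate 9 0, 6), -2), ((replicate 9 0, 4), 1),
             ((replicate 9 0, 2), -4), ((replicate 9 0, 0), 2)] :: lincomb"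
  have "lincomb_value ?C L = lincomb_value (reduce 200 ?C) L"
    using lincomb_value_reduce[OF True] by simp
  also have "\<dots> = 0"
    by (simp add: reduce_recurrence_9 lincomb_value_def)
  finally have "lincomb_value ?C L = 0" .
  moreover have offset: "nat (int L + int k) = L + k" for k
    by simp
  ultimately show ?thesis
    using offset[of 2] offset[of 4] offset[of 6] offset[of 8] by (simp add: lincomb_value_def)
next
  case False
  then have "L = 0 \<or> L = 1 \<or> L = 2"
    by auto
  then show ?thesis
    by (elim disjE) (simp_all add: profile_count_9_small)
qed

lemma T23_9_eq_profile_count:
  "T23_9 N = (if 3 dvd N then profile_count (replicate 9 0) (2 * (N div 3)) else 0)"
proof (cases "3 dvd N")
  case True
  then obtain k where k: "N = 3 * k"
    by blast
  have "card P = N" if "P \<in> tilings 2 3 9 (2 * k)" for P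
    using card_tiling[OF that] k by simp
  then have "{P \<in> tilings 2 3 9 (2 * k). card P = N} = tilings_of 2 3 (profile_region (replicate 9 0) (2 * k))"
    by (auto simp: tilings_eq_tilings_of_rect rect_eq_profile_region)
  then show ?thesis
    using k by (simp add: T23_9_def card_tilings_of_profile_region)
next
  case False
  then have "\<not> 3 dvd 2 * N"
    by presburger
  with False show ?thesis
    by (simp add: T23_9_def)
qed

lemma T23_9_mult_3: "T23_9 (3 * k) = profile_count (replicate 9 0) (2 * k)"
  by (simp add: T23_9_eq_profile_count)

lemma T23_9_not_mult_3: "\<not> 3 dvd N \<Longrightarrow> T23_9 N = 0"
  by (simp add: T23_9_eq_profile_count)

lemma T23_9_small: "map T23_9 [0..<12] = [1, 0, 0, 1, 0, 0, 1, 0, 0, 5, 0, 0]"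
proof -
  have "map T23_9 [0..<12]
      = map (\<lambda>N. if 3 dvd N then profile_count (replicate 9 0) (2 * (N div 3)) else 0) [0..<12]"
    by (intro map_cong refl T23_9_eq_profile_count)
  also have "\<dots> = [1, 0, 0, 1, 0, 0, 1, 0, 0, 5, 0, 0]"
    by code_simp
  finally show ?thesis .
qed

lemma T23_9_recurrence:
  "T23_9 (N + 12) + T23_9 (N + 6) + 2 * T23_9 N = 2 * T23_9 (N + 9) + 4 * T23_9 (N + 3)"
proof (cases "3 dvd N")
  case True
  then obtain k where N: "N = 3 * k"
    by blast
  have T: "T23_9 (N + 3 * d) = profile_count (replicate 9 0) (2 * k + 2 * d)" for d
    using T23_9_mult_3[of "k + d"] by (simp add: N algebra_simps)
  show ?thesis
    using T[of 4] T[of 3] T[of 2] T[of 1] T[of 0] profile_count_9_recurrence[of "2 * k"] by simp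
next
  case False
  then have "\<not> 3 dvd (N + 3)" "\<not> 3 dvd (N + 6)" "\<not> 3 dvd (N + 9)" "\<not> 3 dvd (N + 12)"
    by presburger+
  with False show ?thesis
    by (simp add: T23_9_not_mult_3)
qed

lemma fps_nth_mult_denominator:
  fixes a :: "nat \<Rightarrow> 'a::comm_ring_1"
  shows "fps_nth ((1 - 2 * fps_X ^ 3 + fps_X ^ 6 - 4 * fps_X ^ 9 + 2 * fps_X ^ 12) * Abs_fps a) n
       = a n - 2 * (if 3 \<le> n then a (n - 3) else 0) + (if 6 \<le> n then a (n - 6) else 0)
         - 4 * (if 9 \<le> n then a (n - 9) else 0) + 2 * (if 12 \<le> n then a (n - 12) else 0)"
proof -
  let ?A = "Abs_fps a"
  have "(1 - 2 * fps_X ^ 3 + fps_X ^ 6 - 4 * fps_X ^ 9 + 2 * fps_X ^ 12) * ?A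
      = ?A - 2 * (fps_X ^ 3 * ?A) + fps_X ^ 6 * ?A - 4 * (fps_X ^ 9 * ?A) + 2 * (fps_X ^ 12 * ?A)"
    by (simp add: algebra_simps)
  then show ?thesis
    by (simp add: fps_X_power_mult_nth numeral_fps_const not_less)
qed

lemma T23_9_fps_mult_denominator:
  "(1 - 2 * fps_X ^ 3 + fps_X ^ 6 - 4 * fps_X ^ 9 + 2 * fps_X ^ 12) * Abs_fps (\<lambda>N. of_nat (T23_9 N))
   = (1 - fps_X ^ 3 :: rat fps)"
proof (rule fps_ext)
  fix n
  show "fps_nth ((1 - 2 * fps_X ^ 3 + fps_X ^ 6 - 4 * fps_X ^ 9 + 2 * fps_X ^ 12)
           * Abs_fps (\<lambda>N. of_nat (T23_9 N))) n = fps_nth (1 - fps_X ^ 3 :: rat fps) n"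
  proof (cases "12 \<le> n")
    case True
    then obtain m where "n = m + 12"
      by (metis add.commute le_Suc_ex)
    then show ?thesis
      unfolding fps_nth_mult_denominator
      using arg_cong[OF T23_9_recurrence[of m], of "of_nat :: nat \<Rightarrow> rat"] by (simp add: add.commute)
  next
    case False
    then have "n < 12"
      by simp
    then have "n \<in> {0, 1, 2, 3, 4, 5, 6, 7, 8, 9, 10, 11}"
      by (simp add: numeral_eq_Suc less_Suc_eq)
    moreover have "T23_9 k = [1, 0, 0, 1, 0, 0, 1, 0, 0, 5, 0, 0] ! k" if "k < 12" for k
      using arg_cong[OF T23_9_small, of "\<lambda>xs. xs ! k"] that by simp
    ultimately show ?thesis
      unfolding fps_nth_mult_denominator by (elim insertE emptyE) simp_all
  qed
qed

lemma fps_eq_divide_if_mult_eq: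
  fixes A D P :: "'a::field fps"
  assumes "fps_nth D 0 \<noteq> 0" "D * A = P"
  shows "A = P / D"
proof -
  have "D \<noteq> 0"
    using assms(1) by auto
  then show ?thesis
    unfolding assms(2)[symmetric] by simp
qed

theorem mainTheorem12:
  shows "Abs_fps (\<lambda>N. of_nat (T23_9 N) :: rat) =
         (1 - fps_X ^ 3) / (1 - 2 * fps_X ^ 3 + fps_X ^ 6 - 4 * fps_X ^ 9 + 2 * fps_X ^ 12)"
  by (rule fps_eq_divide_if_mult_eq[OF _ T23_9_fps_mult_denominator]) simp

end
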